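(* Let $n\ge1$, $V=(\mathbb F_2)^n$, let $\rho\in\mathrm{Sym}(V)$ with $0\rho=0$, and let $\bar\rho$ be the corresponding Feistel operator. For $i=1,2$ let $A_i, D_i$ be subgroups of $V$ and let $\varphi_i:A_i\to V$ be a group homomorphism, and set \[ \mathcal U_i=\{(a,\ a\varphi_i+d)\mid a\in A_i,\ d\in D_i\}\le V\times V. \] Suppose $\mathcal U_1\bar\rho=\mathcal U_2$. Then: \begin{enumerate} \item $\mathrm{Ker}\,\varphi_1\le D_2$; \item $D_2\le A_1$; \item $A_2=A_1\varphi_1+D_1$; \item $D_2\varphi_1\le D_1$. \end{enumerate} Moreover, \begin{itemize} \item[(i)] if $D_1=\{0\}$ and $D_2=\{0\}$, then $\rho$ is linear on $A_2$, i.e. $(x+y)\rho=x\rho+y\rho$ for all $x,y\in A_2$; \item[(ii)] if $\mathcal U_1=A_1\times D_1$ and $\mathcal U_2=A_2\times D_2$, then $D_1=A_2$ and $D_2=A_1$. \end{itemize}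
   Context: Maps act on the right; $+$ is bitwise XOR. For $\rho\in\mathrm{Sym}(V)$, the Feistel operator induced by $\rho$ is $\bar\rho:V\times V\to V\times V$, $(x_1,x_2)\bar\rho=(x_2,\ x_1+x_2\rho)$. For a set $S$ and a map $f$, $Sf=\{sf\mid s\in S\}$. *)

theory Defs
  imports "HOL-Analysis.Finite_Cartesian_Product" "HOL-Library.Z2"
begin

text \<open>V = (F_2)^n is modelled as the type bit ^ 'n for a finite index type 'n
  (so n = CARD('n) \<ge> 1); addition is componentwise addition in F_2, i.e. XOR.\<close>

type_synonym 'n V = "bit ^ 'n"

definition feistel :: "('n::finite V \<Rightarrow> 'n V) \<Rightarrow> 'n V \<times> 'n V \<Rightarrow> 'n V \<times> 'n V" where
  "feistel \<rho> = (\<lambda>(x1, x2). (x2, x1 + \<rho> x2))"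

text \<open>Subgroup of V (every element is its own inverse, so closure under + and 0 suffices;
  we also state closure under negation for literal faithfulness).\<close>
definition subgrp :: "'n::finite V set \<Rightarrow> bool" where
  "subgrp A \<longleftrightarrow> 0 \<in> A \<and> (\<forall>x\<in>A. \<forall>y\<in>A. x + y \<in> A) \<and> (\<forall>x\<in>A. - x \<in> A)"

definition ghom_on :: "'n::finite V set \<Rightarrow> ('n V \<Rightarrow> 'n V) \<Rightarrow> bool" where
  "ghom_on A \<phi> \<longleftrightarrow> (\<forall>x\<in>A. \<forall>y\<in>A. \<phi> (x + y) = \<phi> x + \<phi> y)"

definition Ugrp :: "'n::finite V set \<Rightarrow> 'n V set \<Rightarrow> ('n V \<Rightarrow> 'n V) \<Rightarrow> ('n V \<times> 'n V) set" where
  "Ugrp A D \<phi> = {(a, \<phi> a + d) | a d. a \<in> A \<and> d \<in> D}"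

end

theory Submission
  imports Defs
begin

text \<open>Since V has characteristic 2, the Feistel operator is invertible for every map \<rho>,
  with inverse (y1, y2) \<mapsto> (y2 + y1 \<rho>, y1). Hence feistel \<rho> ` U1 = U2 amounts to the transfer
  condition (b, c) \<in> U2 \<longleftrightarrow> (c + b \<rho>, b) \<in> U1 for all b and c, and claims 1-4 and (ii)
  follow by choosing b and c so that one side holds trivially. For (i), taking b = a \<phi>1 shows that
  \<rho> + \<phi>2 inverts \<phi>1 on A1 when D2 = 0; as A2 = A1 \<phi>1 when D1 = 0, the map \<rho> + \<phi>2 is
  then additive on A2, and so is \<rho>.\<close>

lemma V_uminus_eq [simp]: "- (x :: 'n::finite V) = x"
  by (simp add: vec_eq_iff)

lemma V_add_self [simp]: "(x :: 'n::finite V) + x = 0"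
  by (metis V_uminus_eq left_minus)

lemma V_add_cancel_left [simp]: "(x :: 'n::finite V) + (x + y) = y"
  by (simp flip: add.assoc)

lemma V_add_eq_iff_eq_add: "(x :: 'n::finite V) + y = z \<longleftrightarrow> x = z + y"
  by (auto simp: add.assoc)

lemma subgrp_zero: "subgrp A \<Longrightarrow> 0 \<in> A"
  by (simp add: subgrp_def)

lemma subgrp_add: "subgrp A \<Longrightarrow> x \<in> A \<Longrightarrow> y \<in> A \<Longrightarrow> x + y \<in> A"
  by (simp add: subgrp_def)

lemma ghom_on_add: "ghom_on A \<phi> \<Longrightarrow> x \<in> A \<Longrightarrow> y \<in> A \<Longrightarrow> \<phi> (x + y) = \<phi> x + \<phi> y"
  by (simp add: ghom_on_def)

lemma ghom_on_zero:
  assumes "subgrp A" and "ghom_on A \<phi>"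
  shows "\<phi> 0 = 0"
  using ghom_on_add[OF assms(2), of 0 0] subgrp_zero[OF assms(1)] by simp

lemma mem_Ugrp_iff: "(x, y) \<in> Ugrp A D \<phi> \<longleftrightarrow> x \<in> A \<and> \<phi> x + y \<in> D"
proof
  assume "(x, y) \<in> Ugrp A D \<phi>"
  then obtain d where "x \<in> A" "d \<in> D" "y = \<phi> x + d"
    unfolding Ugrp_def by blast
  then show "x \<in> A \<and> \<phi> x + y \<in> D"
    by simp
next
  assume "x \<in> A \<and> \<phi> x + y \<in> D"
  moreover have "y = \<phi> x + (\<phi> x + y)"
    by simp
  ultimately show "(x, y) \<in> Ugrp A D \<phi>"
    unfolding Ugrp_def by blast
qed

lemma feistel_apply: "feistel \<rho> (a, y) = (y, a + \<rho> y)"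
  by (simp add: feistel_def)

lemma mem_feistel_image_iff: "(b, c) \<in> feistel \<rho> ` S \<longleftrightarrow> (c + \<rho> b, b) \<in> S"
proof
  assume "(b, c) \<in> feistel \<rho> ` S"
  then obtain a y where "(a, y) \<in> S" and "(b, c) = feistel \<rho> (a, y)"
    by auto
  then show "(c + \<rho> b, b) \<in> S"
    by (simp add: feistel_apply add.assoc)
next
  assume "(c + \<rho> b, b) \<in> S"
  moreover have "(b, c) = feistel \<rho> (c + \<rho> b, b)"
    by (simp add: feistel_apply add.assoc)
  ultimately show "(b, c) \<in> feistel \<rho> ` S"
    by (rule rev_image_eqI)
qed

lemma feistel_image_Times_swap:
  fixes \<rho> :: "'n::finite V \<Rightarrow> 'n V"
  assumes "\<rho> 0 = 0" and "0 \<in> A1" and "0 \<in> D1" and "0 \<in> A2" and "0 \<in> D2"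
    and U: "feistel \<rho> ` (A1 \<times> D1) = A2 \<times> D2"
  shows "D1 = A2 \<and> D2 = A1"
proof -
  have transfer: "b \<in> A2 \<and> c \<in> D2 \<longleftrightarrow> c + \<rho> b \<in> A1 \<and> b \<in> D1" for b c
    using mem_feistel_image_iff[of b c \<rho> "A1 \<times> D1"] by (simp add: U)
  have "D1 \<subseteq> A2"
  proof
    fix d assume "d \<in> D1"
    then show "d \<in> A2" using transfer[of d "\<rho> d"] \<open>0 \<in> A1\<close> by simp
  qed
  moreover have "A2 \<subseteq> D1"
  proof
    fix b assume "b \<in> A2"
    then show "b \<in> D1" using transfer[of b 0] \<open>0 \<in> D2\<close> by simp
  qed
  moreover have "D2 = A1"
  proof (intro set_eqI)
    fix c
    show "c \<in> D2 \<longleftrightarrow> c \<in> A1" using transfer[of 0 c] assms(1,3,4) by simp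
  qed
  ultimately show ?thesis by blast
qed

locale feistel_Ugrp_pair =
  fixes \<rho> \<phi>1 \<phi>2 :: "'n::finite V \<Rightarrow> 'n V"
    and A1 A2 D1 D2 :: "'n V set"
  assumes rho0: "\<rho> 0 = 0"
    and A1: "subgrp A1" and A2: "subgrp A2"
    and D1: "subgrp D1" and D2: "subgrp D2"
    and phi1: "ghom_on A1 \<phi>1" and phi2: "ghom_on A2 \<phi>2"
    and U: "feistel \<rho> ` Ugrp A1 D1 \<phi>1 = Ugrp A2 D2 \<phi>2"
begin

lemma transfer_iff:
  "b \<in> A2 \<and> \<phi>2 b + c \<in> D2 \<longleftrightarrow> c + \<rho> b \<in> A1 \<and> \<phi>1 (c + \<rho> b) + b \<in> D1"
  using mem_feistel_image_iff[of b c \<rho> "Ugrp A1 D1 \<phi>1"] by (simp add: U mem_Ugrp_iff)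

lemma phi2_zero: "\<phi>2 0 = 0"
  using ghom_on_zero[OF A2 phi2] .

lemma kernel_subset_D2: "{a \<in> A1. \<phi>1 a = 0} \<subseteq> D2"
proof
  fix a assume "a \<in> {a \<in> A1. \<phi>1 a = 0}"
  then show "a \<in> D2"
    using transfer_iff[of 0 a] rho0 phi2_zero subgrp_zero[OF D1] by simp
qed

lemma D2_subset_A1: "D2 \<subseteq> A1"
  and phi1_image_D2_subset_D1: "\<phi>1 ` D2 \<subseteq> D1"
proof -
  have "e \<in> A1 \<and> \<phi>1 e \<in> D1" if "e \<in> D2" for e
    using transfer_iff[of 0 e] that rho0 phi2_zero subgrp_zero[OF A2] by simp
  then show "D2 \<subseteq> A1" and "\<phi>1 ` D2 \<subseteq> D1"
    by auto
qed

lemma A2_eq: "A2 = {\<phi>1 a + d | a d. a \<in> A1 \<and> d \<in> D1}"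
proof (intro set_eqI iffI)
  fix b assume "b \<in> A2"
  then have "\<phi>2 b + \<rho> b \<in> A1" and "\<phi>1 (\<phi>2 b + \<rho> b) + b \<in> D1"
    using transfer_iff[of b "\<phi>2 b"] subgrp_zero[OF D2] by simp_all
  moreover have "b = \<phi>1 (\<phi>2 b + \<rho> b) + (\<phi>1 (\<phi>2 b + \<rho> b) + b)"
    by simp
  ultimately show "b \<in> {\<phi>1 a + d | a d. a \<in> A1 \<and> d \<in> D1}"
    by blast
next
  fix b assume "b \<in> {\<phi>1 a + d | a d. a \<in> A1 \<and> d \<in> D1}"
  then obtain a d where "a \<in> A1" "d \<in> D1" "b = \<phi>1 a + d" by blast
  then show "b \<in> A2"
    using transfer_iff[of b "a + \<rho> b"] by (simp add: add.assoc)
qed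

lemma rho_plus_phi2_inverts_phi1:
  assumes "D2 = {0}" and "a \<in> A1"
  shows "\<rho> (\<phi>1 a) + \<phi>2 (\<phi>1 a) = a"
proof -
  have "\<phi>2 (\<phi>1 a) + (a + \<rho> (\<phi>1 a)) \<in> D2"
    using transfer_iff[of "\<phi>1 a" "a + \<rho> (\<phi>1 a)"] assms(2) subgrp_zero[OF D1]
    by (simp add: add.assoc)
  then have "a + (\<rho> (\<phi>1 a) + \<phi>2 (\<phi>1 a)) = 0"
    using assms(1) by (simp add: ac_simps)
  then show ?thesis
    by (simp add: V_add_eq_iff_eq_add)
qed

lemma rho_additive_on_A2:
  assumes "D1 = {0}" and "D2 = {0}" and "x \<in> A2" and "y \<in> A2"
  shows "\<rho> (x + y) = \<rho> x + \<rho> y"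
proof -
  have "A2 = \<phi>1 ` A1"
    using A2_eq assms(1) by auto
  then obtain a b where a: "a \<in> A1" "x = \<phi>1 a" and b: "b \<in> A1" "y = \<phi>1 b"
    using assms(3,4) by blast
  have "x + y = \<phi>1 (a + b)"
    using ghom_on_add[OF phi1 a(1) b(1)] a b by simp
  then have "\<rho> (x + y) + \<phi>2 (x + y) = (\<rho> x + \<phi>2 x) + (\<rho> y + \<phi>2 y)"
    using rho_plus_phi2_inverts_phi1[OF assms(2)] subgrp_add[OF A1 a(1) b(1)] a b by simp
  moreover have "\<phi>2 (x + y) = \<phi>2 x + \<phi>2 y"
    using ghom_on_add[OF phi2 assms(3,4)] .
  ultimately have "\<rho> (x + y) = (\<rho> x + \<phi>2 x) + (\<rho> y + \<phi>2 y) + (\<phi>2 x + \<phi>2 y)"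
    by (simp add: V_add_eq_iff_eq_add)
  then show ?thesis
    by (simp add: ac_simps)
qed

end

theorem lemma4p6:
  fixes \<rho> \<phi>1 \<phi>2 :: "'n::finite V \<Rightarrow> 'n V"
    and A1 A2 D1 D2 :: "'n V set"
  assumes rho_sym: "bij \<rho>"
    and rho0: "\<rho> 0 = 0"
    and A1: "subgrp A1" and A2: "subgrp A2"
    and D1: "subgrp D1" and D2: "subgrp D2"
    and phi1: "ghom_on A1 \<phi>1" and phi2: "ghom_on A2 \<phi>2"
    and U: "feistel \<rho> ` Ugrp A1 D1 \<phi>1 = Ugrp A2 D2 \<phi>2"
  shows "{a \<in> A1. \<phi>1 a = 0} \<subseteq> D2
    \<and> D2 \<subseteq> A1
    \<and> A2 = {\<phi>1 a + d | a d. a \<in> A1 \<and> d \<in> D1}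
    \<and> \<phi>1 ` D2 \<subseteq> D1
    \<and> (D1 = {0} \<and> D2 = {0} \<longrightarrow> (\<forall>x\<in>A2. \<forall>y\<in>A2. \<rho> (x + y) = \<rho> x + \<rho> y))
    \<and> (Ugrp A1 D1 \<phi>1 = A1 \<times> D1 \<and> Ugrp A2 D2 \<phi>2 = A2 \<times> D2 \<longrightarrow> D1 = A2 \<and> D2 = A1)"
proof -
  interpret feistel_Ugrp_pair \<rho> \<phi>1 \<phi>2 A1 A2 D1 D2
    using assms by unfold_locales
  have "D1 = A2 \<and> D2 = A1" if "Ugrp A1 D1 \<phi>1 = A1 \<times> D1" and "Ugrp A2 D2 \<phi>2 = A2 \<times> D2"
    using feistel_image_Times_swap[of \<rho> A1 D1 A2 D2, OF rho0 subgrp_zero[OF A1] subgrp_zero[OF D1]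
        subgrp_zero[OF A2] subgrp_zero[OF D2]] U that by simp
  then show ?thesis
    using kernel_subset_D2 D2_subset_A1 A2_eq phi1_image_D2_subset_D1 rho_additive_on_A2
    by auto
qed

end
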